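(* Let $G$ be a finite simple connected graph and let $\sigma$ be a position of the parallel chip-firing game on $G$ with period $p(\sigma)>1$. Then there exists $T\ge 0$ such that for all $t\ge T$ and all vertices $v\in V(G)$, $U^t\sigma(v)\le 2\deg(v)-1$.
   Context: Parallel chip-firing game: on a finite simple connected graph $G$, a position $\sigma$ assigns a nonnegative integer $\sigma(v)$ (number of chips) to each vertex $v$. In one step, every vertex $v$ with $\sigma(v)\ge \deg(v)$ (a "firing" vertex) simultaneously sends one chip to each neighbor; other vertices do not send chips. Writing $\Phi_\sigma(v)$ for the number of neighbors $w$ of $v$ with $\sigma(w)\ge\deg(w)$, the step operator $U$ is given by $U\sigma(v)=\sigma(v)+\Phi_\sigma(v)$ if $\sigma(v)\le \deg(v)-1$ and $U\sigma(v)=\sigma(v)+\Phi_\sigma(v)-\deg(v)$ if $\sigma(v)\ge\deg(v)$. $U^0\sigma=\sigma$, $U^m\sigma=U(U^{m-1}\sigma)$. The period $p(\sigma)$ is the least positive integer $p$ such that $U^{t+p}\sigma=U^t\sigma$ for all sufficiently large $t$. *)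

theory Defs
  imports Main
begin

definition simple_graph :: "'a set \<Rightarrow> ('a \<Rightarrow> 'a \<Rightarrow> bool) \<Rightarrow> bool" where
  "simple_graph V E \<longleftrightarrow> finite V \<and> (\<forall>u v. E u v \<longrightarrow> u \<in> V \<and> v \<in> V)
     \<and> (\<forall>u v. E u v \<longrightarrow> E v u) \<and> (\<forall>v. \<not> E v v)"

definition connected_graph :: "'a set \<Rightarrow> ('a \<Rightarrow> 'a \<Rightarrow> bool) \<Rightarrow> bool" where
  "connected_graph V E \<longleftrightarrow> (\<forall>u\<in>V. \<forall>v\<in>V. E\<^sup>*\<^sup>* u v)"

definition deg :: "'a set \<Rightarrow> ('a \<Rightarrow> 'a \<Rightarrow> bool) \<Rightarrow> 'a \<Rightarrow> nat" where
  "deg V E v = card {w \<in> V. E v w}"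

definition Phi :: "'a set \<Rightarrow> ('a \<Rightarrow> 'a \<Rightarrow> bool) \<Rightarrow> ('a \<Rightarrow> nat) \<Rightarrow> 'a \<Rightarrow> nat" where
  "Phi V E \<sigma> v = card {w \<in> V. E v w \<and> \<sigma> w \<ge> deg V E w}"

text \<open>Parallel chip-firing step operator (positions outside V are left unchanged,
  since there deg = 0 and Phi = 0).\<close>
definition U :: "'a set \<Rightarrow> ('a \<Rightarrow> 'a \<Rightarrow> bool) \<Rightarrow> ('a \<Rightarrow> nat) \<Rightarrow> ('a \<Rightarrow> nat)" where
  "U V E \<sigma> = (\<lambda>v. if \<sigma> v < deg V E v
                     then \<sigma> v + Phi V E \<sigma> v
                     else \<sigma> v + Phi V E \<sigma> v - deg V E v)"

definition period :: "'a set \<Rightarrow> ('a \<Rightarrow> 'a \<Rightarrow> bool) \<Rightarrow> ('a \<Rightarrow> nat) \<Rightarrow> nat" where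
  "period V E \<sigma> = (LEAST p. p > 0 \<and>
      (\<exists>T. \<forall>t\<ge>T. (U V E ^^ (t + p)) \<sigma> = (U V E ^^ t) \<sigma>))"

end

theory Submission
  imports Defs
begin

(* Let s t = U^t sigma.  Two facts combine to the theorem.
   (1) Invariance: once s t v <= 2 deg v - 1, this bound persists, because v receives
       at most deg v chips per step and only gains chips while it does not fire.
       So it suffices that every vertex is non-firing at some time.
   (2) No vertex fires forever when the period exceeds 1.  If v fires at all times
       t >= T, then each step in which a neighbour u does not fire strictly decreases
       the pile at v (v loses deg v chips and regains fewer); a natural-number sequence
       cannot decrease infinitely often, so u eventually fires forever too.  By
       connectivity every vertex eventually fires forever; then every vertex sends and
       receives deg chips, the position is a fixed point of U, and the period is 1.
   The file first proves the counting facts about Phi, then a generic descent lemma,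
   the spreading of permanent firing, the fixed-point argument, the invariance, and
   finally derives the theorem.  "Eventually" is expressed with the filter
   sequentially, so that finitely many vertex-wise statements combine by
   eventually_ball_finite. *)

lemma Phi_le_deg:
  assumes "finite V"
  shows "Phi V E s v \<le> deg V E v"
  unfolding Phi_def deg_def using assms by (intro card_mono) auto

lemma Phi_less_deg_if_neighbour_idle:
  assumes "finite V" "u \<in> V" "E v u" "s u < deg V E u"
  shows "Phi V E s v < deg V E v"
proof -
  have "u \<in> {w \<in> V. E v w} - {w \<in> V. E v w \<and> deg V E w \<le> s w}"
    using assms(2-4) by simp
  then have "{w \<in> V. E v w \<and> deg V E w \<le> s w} \<subset> {w \<in> V. E v w}"
    by blast
  then show ?thesis
    unfolding Phi_def deg_def using assms(1) by (intro psubset_card_mono) auto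
qed

lemma eventually_not_if_strict_descent:
  fixes f :: "nat \<Rightarrow> nat"
  assumes mono: "\<And>t. t \<ge> T \<Longrightarrow> f (Suc t) \<le> f t"
    and strict: "\<And>t. t \<ge> T \<Longrightarrow> P t \<Longrightarrow> f (Suc t) < f t"
  shows "\<forall>\<^sub>F t in sequentially. \<not> P t"
proof (rule ccontr)
  assume "\<not> ?thesis"
  then have often: "\<forall>N. \<exists>t\<ge>N. P t"
    by (simp add: not_eventually frequently_sequentially)
  define g where "g k = f (T + k)" for k
  have g_antimono: "g j \<le> g k" if "k \<le> j" for j k
    using lift_Suc_antimono_le[of g, OF _ that] mono unfolding g_def by simp
  have "\<exists>k. g k + n \<le> g 0" for n
  proof (induction n)
    case 0 show ?case by auto
  next
    case (Suc n)
    then obtain k where k: "g k + n \<le> g 0" by blast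
    obtain t where t: "t \<ge> T + k" "P t" using often by blast
    define j where "j = t - T"
    have "g (Suc j) < g j"
      using strict[of t] t unfolding g_def j_def by (simp add: Suc_diff_le)
    moreover have "g j \<le> g k" using t g_antimono j_def by simp
    ultimately have "g (Suc j) + Suc n \<le> g 0" using k by simp
    then show ?case by blast
  qed
  then obtain k where "g k + Suc (g 0) \<le> g 0" by blast
  then show False by simp
qed

text \<open>If v fires at all large times, then so does every neighbour u: each step in
  which u is idle strictly lowers the pile at v.\<close>
lemma firing_spreads_to_neighbour:
  assumes fin: "finite V" and "u \<in> V" "E v u"
    and v_fires: "\<forall>\<^sub>F t in sequentially. deg V E v \<le> (U V E ^^ t) \<sigma> v"
  shows "\<forall>\<^sub>F t in sequentially. deg V E u \<le> (U V E ^^ t) \<sigma> u"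
proof -
  define s where "s t = (U V E ^^ t) \<sigma>" for t
  obtain T where T: "\<And>t. t \<ge> T \<Longrightarrow> deg V E v \<le> s t v"
    using v_fires unfolding s_def eventually_sequentially by blast
  have step: "s (Suc t) v = s t v + Phi V E (s t) v - deg V E v" if "t \<ge> T" for t
    using T[OF that] unfolding s_def by (simp add: U_def)
  have "\<forall>\<^sub>F t in sequentially. \<not> s t u < deg V E u"
  proof (rule eventually_not_if_strict_descent[of T "\<lambda>t. s t v"])
    show "s (Suc t) v \<le> s t v" if "t \<ge> T" for t
      using step[OF that] Phi_le_deg[OF fin] by (simp add: le_diff_conv)
    show "s (Suc t) v < s t v" if "t \<ge> T" "s t u < deg V E u" for t
      using step[OF that(1)] T[OF that(1)]
        Phi_less_deg_if_neighbour_idle[of V u E v "s t", OF fin assms(2,3) that(2)] by simp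
  qed
  then show ?thesis unfolding s_def by (simp add: not_less)
qed

lemma firing_spreads_everywhere:
  assumes "simple_graph V E" "connected_graph V E" "v \<in> V"
    and v_fires: "\<forall>\<^sub>F t in sequentially. deg V E v \<le> (U V E ^^ t) \<sigma> v"
  shows "\<forall>\<^sub>F t in sequentially. \<forall>w\<in>V. deg V E w \<le> (U V E ^^ t) \<sigma> w"
proof (rule eventually_ball_finite)
  have fin: "finite V" and edges_in_V: "\<And>x y. E x y \<Longrightarrow> y \<in> V"
    using assms(1) unfolding simple_graph_def by auto
  show "finite V" by (fact fin)
  have "\<forall>\<^sub>F t in sequentially. deg V E w \<le> (U V E ^^ t) \<sigma> w" if "E\<^sup>*\<^sup>* v w" for w
    using that
  proof (induction rule: rtranclp_induct)
    case base show ?case by (fact v_fires)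
  next
    case (step x y)
    then show ?case using firing_spreads_to_neighbour[OF fin edges_in_V] by blast
  qed
  then show "\<forall>w\<in>V. \<forall>\<^sub>F t in sequentially. deg V E w \<le> (U V E ^^ t) \<sigma> w"
    using assms(2,3) unfolding connected_graph_def by blast
qed

text \<open>When every vertex fires, each vertex sends and receives exactly deg chips,
  so the position is a fixed point of U.\<close>
lemma U_fixed_if_all_fire:
  assumes "simple_graph V E" and all_fire: "\<forall>w\<in>V. deg V E w \<le> s w"
  shows "U V E s = s"
proof
  fix v
  have edges_in_V: "\<And>x y. E x y \<Longrightarrow> x \<in> V \<and> y \<in> V"
    using assms(1) unfolding simple_graph_def by auto
  then have "{w \<in> V. E v w \<and> deg V E w \<le> s w} = {w \<in> V. E v w}"
    using all_fire by auto
  then have "Phi V E s v = deg V E v" unfolding Phi_def deg_def by simp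
  moreover have "deg V E v \<le> s v"
  proof (cases "v \<in> V")
    case False
    then have no_nbrs: "{w \<in> V. E v w} = {}" using edges_in_V by blast
    show ?thesis unfolding deg_def no_nbrs by simp
  qed (use all_fire in blast)
  ultimately show "U V E s v = s v" by (simp add: U_def)
qed

lemma period_le_1_if_eventually_fixed:
  assumes "\<forall>\<^sub>F t in sequentially. U V E ((U V E ^^ t) \<sigma>) = (U V E ^^ t) \<sigma>"
  shows "period V E \<sigma> \<le> 1"
proof -
  have "\<exists>T. \<forall>t\<ge>T. (U V E ^^ (t + 1)) \<sigma> = (U V E ^^ t) \<sigma>"
    using assms unfolding eventually_sequentially by simp
  then show ?thesis unfolding period_def by (intro Least_le) simp
qed

lemma exists_idle_time:
  assumes "simple_graph V E" "connected_graph V E" "period V E \<sigma> > 1" "v \<in> V"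
  shows "\<exists>t. (U V E ^^ t) \<sigma> v < deg V E v"
proof (rule ccontr)
  assume "\<not> ?thesis"
  then have "\<forall>\<^sub>F t in sequentially. deg V E v \<le> (U V E ^^ t) \<sigma> v"
    by (simp add: not_less)
  then have "\<forall>\<^sub>F t in sequentially. \<forall>w\<in>V. deg V E w \<le> (U V E ^^ t) \<sigma> w"
    by (rule firing_spreads_everywhere[OF assms(1,2,4)])
  then have "\<forall>\<^sub>F t in sequentially. U V E ((U V E ^^ t) \<sigma>) = (U V E ^^ t) \<sigma>"
    by eventually_elim (rule U_fixed_if_all_fire[OF assms(1)])
  then have "period V E \<sigma> \<le> 1" by (rule period_le_1_if_eventually_fixed)
  with assms(3) show False by simp
qed

text \<open>A single step preserves the bound: an idle vertex holds fewer than deg chips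
  and gains at most deg, a firing vertex does not gain chips.\<close>
lemma U_preserves_bound:
  assumes "finite V" "s v \<le> 2 * deg V E v - 1"
  shows "U V E s v \<le> 2 * deg V E v - 1"
  using assms Phi_le_deg[OF assms(1), of E s v] by (auto simp: U_def)

lemma bound_after_idle_time:
  assumes "finite V" "(U V E ^^ t0) \<sigma> v < deg V E v" "t0 \<le> t"
  shows "(U V E ^^ t) \<sigma> v \<le> 2 * deg V E v - 1"
  using assms(3)
proof (induction t rule: dec_induct)
  case base show ?case using assms(2) by simp
next
  case (step t)
  then show ?case using U_preserves_bound[OF assms(1)] by simp
qed

theorem lemma2p1:
  fixes V :: "'a set" and E :: "'a \<Rightarrow> 'a \<Rightarrow> bool" and \<sigma> :: "'a \<Rightarrow> nat"
  assumes "simple_graph V E" and "connected_graph V E"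
    and "period V E \<sigma> > 1"
  shows "\<exists>T. \<forall>t\<ge>T. \<forall>v\<in>V. (U V E ^^ t) \<sigma> v \<le> 2 * deg V E v - 1"
proof -
  have fin: "finite V" using assms(1) unfolding simple_graph_def by simp
  have "\<forall>v\<in>V. \<forall>\<^sub>F t in sequentially. (U V E ^^ t) \<sigma> v \<le> 2 * deg V E v - 1"
  proof
    fix v assume "v \<in> V"
    then obtain t0 where "(U V E ^^ t0) \<sigma> v < deg V E v"
      using exists_idle_time[OF assms] by blast
    then have "\<forall>t\<ge>t0. (U V E ^^ t) \<sigma> v \<le> 2 * deg V E v - 1"
      using bound_after_idle_time[OF fin] by blast
    then show "\<forall>\<^sub>F t in sequentially. (U V E ^^ t) \<sigma> v \<le> 2 * deg V E v - 1"
      unfolding eventually_sequentially by blast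
  qed
  then have "\<forall>\<^sub>F t in sequentially. \<forall>v\<in>V. (U V E ^^ t) \<sigma> v \<le> 2 * deg V E v - 1"
    by (rule eventually_ball_finite[OF fin])
  then show ?thesis unfolding eventually_sequentially .
qed

end
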